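(* Let $n\ge 0$ be an integer, let $\mathcal{L}=(\mathcal{L}_i)_{i\in\mathbb{N}}$ be a sequence of classes of finite (weighted or unweighted) graphs with $\mathcal{L}_0\subseteq\mathcal{L}_1\subseteq\cdots$, each of asymptotic dimension at most $n$, and let $\mathcal{C}$ be an $\mathcal{L}$-layerable class of finite (weighted or unweighted) graphs. Then $\mathcal{C}$ has asymptotic dimension at most $n+1$. Furthermore, let $a,b,c\ge 1$ and $d\ge 0$ be constants and assume that $\mathcal{C}$ is $c$-linearly $\mathcal{L}$-layerable and that, for every $i$, the class $\mathcal{L}_i$ has an $n$-dimensional control function $D_i$ with $D_i(r)\le ar+bi+d$ for all $r>0$. Then $\mathcal{C}$ has asymptotic dimension at most $n+1$ of linear type. If moreover $d=0$, then $\mathcal{C}$ has Assouad–Nagata dimension at most $n+1$, with an $(n+1)$-dimensional control function $D_{\mathcal C}$ satisfying $D_{\mathcal C}(r)\le 20\big(6(a+2bc)^2+(a+2bc)bc(n+4)\big)\, r$ for all $r>0$.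
   Context: A weighted graph has positive real edge weights and is a metric space on its vertices with the weighted shortest-path distance $d_G$ (infinite between components); unweighted graphs have all weights 1. An induced subgraph $H$ of $G$ inherits the weights and is considered with its own (intrinsic) shortest-path metric $d_H$. A real projection of $G$ is a map $L:V(G)\to\mathbb{R}$ with $|L(x)-L(y)|\le d_G(x,y)$ for all $x,y$. A set $A\subseteq V(G)$ is $(\infty,S)$-bounded with respect to $L$ if $|L(x)-L(y)|\le S$ for all $x,y\in A$. The class $\mathcal{C}$ is $\mathcal{L}$-layerable if there is a function $f:\mathbb{R}^+\to\mathbb{N}$ such that every $G\in\mathcal{C}$ has a real projection $L$ such that for every $S>0$, every $(\infty,S)$-bounded set of $G$ induces a graph in $\mathcal{L}_{f(S)}$; it is $c$-linearly $\mathcal{L}$-layerable if moreover $f(S)\le cS$ for all $S>0$. For a metric space $(X,d)$, a family $\mathcal U$ of subsets is $D$-bounded if every member has diameter at most $D$, and $r$-disjoint if points in different members are at distance $>r$. A function $D:\mathbb{R}^+\to\mathbb{R}^+$ is an $n$-dimensional control function for $X$ (or for a class, if it works for every member) if for every $r>0$ there is a cover $\mathcal U=\mathcal U_1\cup\dots\cup\mathcal U_{n+1}$ of $X$ with each $\mathcal U_i$ $r$-disjoint and each member $D(r)$-bounded. A class has asymptotic dimension at most $n$ if it has an $n$-dimensional control function; of linear type if it has one with $D(r)\le c'r+c'$ for a constant $c'$; and Assouad–Nagata dimension at most $n$ if it has one with $D(r)\le c'r$. *)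

theory Defs
  imports "HOL-Library.Extended_Real"
begin

text \<open>Finite weighted graphs: vertex set, symmetric edge set, weights on edges.
Unweighted graphs are the special case where every edge has weight 1.\<close>

record 'v wgraph =
  verts :: "'v set"
  edges :: "('v \<times> 'v) set"
  weight :: "'v \<Rightarrow> 'v \<Rightarrow> real"

definition finite_wgraph :: "'v wgraph \<Rightarrow> bool" where
  "finite_wgraph G \<longleftrightarrow> finite (verts G) \<and> edges G \<subseteq> verts G \<times> verts G \<and> sym (edges G) \<and>
     (\<forall>(x,y)\<in>edges G. x \<noteq> y \<and> weight G x y > 0 \<and> weight G x y = weight G y x)"

definition walk :: "'v wgraph \<Rightarrow> 'v list \<Rightarrow> bool" where
  "walk G xs \<longleftrightarrow> xs \<noteq> [] \<and> set xs \<subseteq> verts G \<and>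
     (\<forall>i. Suc i < length xs \<longrightarrow> (xs ! i, xs ! Suc i) \<in> edges G)"

definition walk_len :: "'v wgraph \<Rightarrow> 'v list \<Rightarrow> real" where
  "walk_len G xs = sum_list (map (\<lambda>(a,b). weight G a b) (zip xs (tl xs)))"

text \<open>Weighted shortest-path distance (infinite between components).\<close>
definition gdist :: "'v wgraph \<Rightarrow> 'v \<Rightarrow> 'v \<Rightarrow> ereal" where
  "gdist G x y = Inf {ereal (walk_len G xs) | xs. walk G xs \<and> hd xs = x \<and> last xs = y}"

definition induced :: "'v wgraph \<Rightarrow> 'v set \<Rightarrow> 'v wgraph" where
  "induced G A = \<lparr>verts = verts G \<inter> A, edges = edges G \<inter> (A \<times> A), weight = weight G\<rparr>"

definition real_projection :: "'v wgraph \<Rightarrow> ('v \<Rightarrow> real) \<Rightarrow> bool" where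
  "real_projection G L \<longleftrightarrow> (\<forall>x\<in>verts G. \<forall>y\<in>verts G. ereal \<bar>L x - L y\<bar> \<le> gdist G x y)"

definition inf_S_bounded :: "'v wgraph \<Rightarrow> ('v \<Rightarrow> real) \<Rightarrow> real \<Rightarrow> 'v set \<Rightarrow> bool" where
  "inf_S_bounded G L S A \<longleftrightarrow> A \<subseteq> verts G \<and> (\<forall>x\<in>A. \<forall>y\<in>A. \<bar>L x - L y\<bar> \<le> S)"

definition layerable_with :: "'v wgraph set \<Rightarrow> (nat \<Rightarrow> 'v wgraph set) \<Rightarrow> (real \<Rightarrow> nat) \<Rightarrow> bool" where
  "layerable_with C Ls f \<longleftrightarrow> (\<forall>G\<in>C. \<exists>L. real_projection G L \<and>
     (\<forall>S>0. \<forall>A. inf_S_bounded G L S A \<longrightarrow> induced G A \<in> Ls (f S)))"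

definition layerable :: "'v wgraph set \<Rightarrow> (nat \<Rightarrow> 'v wgraph set) \<Rightarrow> bool" where
  "layerable C Ls \<longleftrightarrow> (\<exists>f. layerable_with C Ls f)"

definition linearly_layerable :: "real \<Rightarrow> 'v wgraph set \<Rightarrow> (nat \<Rightarrow> 'v wgraph set) \<Rightarrow> bool" where
  "linearly_layerable c C Ls \<longleftrightarrow> (\<exists>f. layerable_with C Ls f \<and> (\<forall>S>0. real (f S) \<le> c * S))"

definition D_bounded :: "'v wgraph \<Rightarrow> real \<Rightarrow> 'v set set \<Rightarrow> bool" where
  "D_bounded G D U \<longleftrightarrow> (\<forall>X\<in>U. \<forall>x\<in>X. \<forall>y\<in>X. gdist G x y \<le> ereal D)"

definition r_disjoint :: "'v wgraph \<Rightarrow> real \<Rightarrow> 'v set set \<Rightarrow> bool" where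
  "r_disjoint G r U \<longleftrightarrow> (\<forall>X\<in>U. \<forall>Y\<in>U. X \<noteq> Y \<longrightarrow> (\<forall>x\<in>X. \<forall>y\<in>Y. gdist G x y > ereal r))"

definition control_fun :: "(real \<Rightarrow> real) \<Rightarrow> nat \<Rightarrow> 'v wgraph \<Rightarrow> bool" where
  "control_fun D n G \<longleftrightarrow> (\<forall>r>0. D r > 0) \<and>
     (\<forall>r>0. \<exists>U :: nat \<Rightarrow> 'v set set.
        (\<forall>i<Suc n. \<forall>X\<in>U i. X \<subseteq> verts G) \<and>
        (\<Union>i<Suc n. \<Union>(U i)) = verts G \<and>
        (\<forall>i<Suc n. r_disjoint G r (U i)) \<and>
        (\<forall>i<Suc n. D_bounded G (D r) (U i)))"

definition control_fun_class :: "(real \<Rightarrow> real) \<Rightarrow> nat \<Rightarrow> 'v wgraph set \<Rightarrow> bool" where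
  "control_fun_class D n C \<longleftrightarrow> (\<forall>G\<in>C. control_fun D n G)"

definition asdim_le :: "'v wgraph set \<Rightarrow> nat \<Rightarrow> bool" where
  "asdim_le C n \<longleftrightarrow> (\<exists>D. control_fun_class D n C)"

definition asdim_le_linear :: "'v wgraph set \<Rightarrow> nat \<Rightarrow> bool" where
  "asdim_le_linear C n \<longleftrightarrow> (\<exists>D c'. control_fun_class D n C \<and> (\<forall>r>0. D r \<le> c' * r + c'))"

definition ANdim_le :: "'v wgraph set \<Rightarrow> nat \<Rightarrow> bool" where
  "ANdim_le C n \<longleftrightarrow> (\<exists>D c'. control_fun_class D n C \<and> (\<forall>r>0. D r \<le> c' * r))"

end

theory Submission
  imports Defs
begin

(* Fix G in the class, its real projection L and a scale r > 0.  Cut the real line into periods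
   of length P = 2r(n+2), each a wide strip of width P - 2r followed by a narrow strip of width 2r.
   A strip is a layer, so the graph induced by its 2s-thickening has an n-dimensional control
   function; since walks of length at most s from the strip stay in the thickening, this gives an
   (n+1)-coloured cover of the strip that is s-disjoint for the metric of G.  Cover the wide strips
   at scale r, with diameters D_S, and the narrow strips at scale 2r + D_S, with diameters D_B.
   A colour-j set of a wide strip is cut along a window of width r at height r + 2rj; the windows of
   distinct colours are r apart, so the window parts of all colours together form a new colour n+1.
   Each of the two remaining pieces is within distance r of at most one colour-j set of the adjacent
   narrow strip (two such sets would be within 2r + D_S of each other), and is absorbed into it.
   The resulting n+2 families are r-disjoint and (D_B + 2(D_S + r))-bounded, a bound that is linear
   in r when the layering and the control functions of the layers grow linearly. *)

section \<open>Walks and the shortest-path metric\<close>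

lemma walk_len_simps [simp]:
  "walk_len G [] = 0"
  "walk_len G [x] = 0"
  "walk_len G (x # y # xs) = weight G x y + walk_len G (y # xs)"
  by (simp_all add: walk_len_def)

lemma walk_Nil [simp]: "\<not> walk G []"
  by (simp add: walk_def)

lemma walk_singleton [simp]: "walk G [x] \<longleftrightarrow> x \<in> verts G"
  by (simp add: walk_def)

lemma walk_Cons_Cons [simp]:
  "walk G (x # y # xs) \<longleftrightarrow> x \<in> verts G \<and> (x, y) \<in> edges G \<and> walk G (y # xs)"
  by (auto simp: walk_def nth_Cons split: nat.splits)

lemma walk_append:
  assumes "walk G xs" "walk G ys" "last xs = hd ys"
  shows "walk G (xs @ tl ys)" "walk_len G (xs @ tl ys) = walk_len G xs + walk_len G ys"
    and "hd (xs @ tl ys) = hd xs" "last (xs @ tl ys) = last ys"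
proof -
  have "walk G (xs @ tl ys) \<and> walk_len G (xs @ tl ys) = walk_len G xs + walk_len G ys"
    using assms
  proof (induction xs rule: induct_list012)
    case (2 x)
    then show ?case by (cases ys) auto
  qed auto
  then show "walk G (xs @ tl ys)" "walk_len G (xs @ tl ys) = walk_len G xs + walk_len G ys"
    by auto
  have "xs \<noteq> []" "ys \<noteq> []"
    using assms by (auto simp: walk_def)
  with assms(3) show "hd (xs @ tl ys) = hd xs" "last (xs @ tl ys) = last ys"
    by (cases ys; simp add: last_append)+
qed

lemma walk_rev:
  assumes G: "finite_wgraph G" and "walk G xs"
  shows "walk G (rev xs) \<and> walk_len G (rev xs) = walk_len G xs"
  using assms(2)
proof (induction xs rule: induct_list012)
  case (3 x y xs)
  then have "(y, x) \<in> edges G" "weight G y x = weight G x y" "y \<in> verts G"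
    using G unfolding finite_wgraph_def sym_def by auto
  with 3 walk_append[of G "rev (y # xs)" "[y, x]"] show ?case by simp
qed auto

lemma walk_induced_iff: "walk (induced G T) xs \<longleftrightarrow> walk G xs \<and> set xs \<subseteq> T"
  unfolding walk_def induced_def by (auto; meson Suc_lessD nth_mem subsetD)

lemma walk_len_induced [simp]: "walk_len (induced G T) xs = walk_len G xs"
  by (simp add: walk_len_def induced_def)

lemma gdist_le_walk_len:
  "walk G xs \<Longrightarrow> gdist G (hd xs) (last xs) \<le> ereal (walk_len G xs)"
  unfolding gdist_def by (rule Inf_lower) blast

lemma gdist_le_iff:
  "gdist G x y \<le> ereal e \<longleftrightarrow>
     (\<forall>\<epsilon>>0. \<exists>xs. walk G xs \<and> hd xs = x \<and> last xs = y \<and> walk_len G xs < e + \<epsilon>)"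
proof
  assume le: "gdist G x y \<le> ereal e"
  show "\<forall>\<epsilon>>0. \<exists>xs. walk G xs \<and> hd xs = x \<and> last xs = y \<and> walk_len G xs < e + \<epsilon>"
  proof (intro allI impI)
    fix \<epsilon> :: real assume "\<epsilon> > 0"
    then have "gdist G x y < ereal (e + \<epsilon>)"
      using le by (simp add: order_le_less_trans)
    then show "\<exists>xs. walk G xs \<and> hd xs = x \<and> last xs = y \<and> walk_len G xs < e + \<epsilon>"
      unfolding gdist_def Inf_less_iff by auto
  qed
next
  assume walks: "\<forall>\<epsilon>>0. \<exists>xs. walk G xs \<and> hd xs = x \<and> last xs = y \<and> walk_len G xs < e + \<epsilon>"
  show "gdist G x y \<le> ereal e"
  proof (rule ereal_le_epsilon2)
    fix \<epsilon> :: real assume "\<epsilon> > 0"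
    then obtain xs where "walk G xs" "hd xs = x" "last xs = y" "walk_len G xs < e + \<epsilon>"
      using walks by blast
    then show "gdist G x y \<le> ereal e + ereal \<epsilon>"
      using gdist_le_walk_len[of G xs] by (simp add: order_trans)
  qed
qed

lemma gdist_self: "x \<in> verts G \<Longrightarrow> gdist G x x \<le> 0"
  using gdist_le_walk_len[of G "[x]"] by (simp add: zero_ereal_def)

lemma gdist_commute:
  assumes G: "finite_wgraph G"
  shows "gdist G x y = gdist G y x"
proof -
  have "{ereal (walk_len G xs) | xs. walk G xs \<and> hd xs = x \<and> last xs = y}
      \<subseteq> {ereal (walk_len G xs) | xs. walk G xs \<and> hd xs = y \<and> last xs = x}" for x y
  proof clarify
    fix xs assume "walk G xs" "x = hd xs" "y = last xs"
    with walk_rev[OF G] show "\<exists>ys. ereal (walk_len G xs) = ereal (walk_len G ys) \<and>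
        walk G ys \<and> hd ys = last xs \<and> last ys = hd xs"
      by (intro exI[of _ "rev xs"]) (auto simp: hd_rev last_rev)
  qed
  from subset_antisym[OF this[of x y] this[of y x]] show ?thesis
    unfolding gdist_def by simp
qed

lemma gdist_triangle:
  assumes "gdist G x y \<le> ereal a" "gdist G y z \<le> ereal b"
  shows "gdist G x z \<le> ereal (a + b)"
  unfolding gdist_le_iff
proof (intro allI impI)
  fix \<epsilon> :: real assume "\<epsilon> > 0"
  then obtain xs ys where
    xs: "walk G xs" "hd xs = x" "last xs = y" "walk_len G xs < a + \<epsilon>/2" and
    ys: "walk G ys" "hd ys = y" "last ys = z" "walk_len G ys < b + \<epsilon>/2"
    using assms unfolding gdist_le_iff by (meson half_gt_zero)
  with walk_append[of G xs ys]
  show "\<exists>zs. walk G zs \<and> hd zs = x \<and> last zs = z \<and> walk_len G zs < a + b + \<epsilon>"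
    by (intro exI[of _ "xs @ tl ys"]) auto
qed

lemma D_bounded_mono: "D \<le> D' \<Longrightarrow> D_bounded G D \<U> \<Longrightarrow> D_bounded G D' \<U>"
  unfolding D_bounded_def by (meson ereal_less_eq(3) order_trans)

lemma r_disjointD:
  "r_disjoint G r \<U> \<Longrightarrow> X \<in> \<U> \<Longrightarrow> Y \<in> \<U> \<Longrightarrow> X \<noteq> Y \<Longrightarrow> x \<in> X \<Longrightarrow> y \<in> Y \<Longrightarrow>
    ereal r < gdist G x y"
  by (simp add: r_disjoint_def)

section \<open>Real projections and strips\<close>

lemma gdist_le_gdist_induced: "gdist G x y \<le> gdist (induced G T) x y"
  unfolding gdist_def by (rule Inf_superset_mono) (auto simp: walk_induced_iff)

lemma real_projection_abs_le:
  assumes "real_projection G L" "x \<in> verts G" "y \<in> verts G" "gdist G x y \<le> ereal e"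
  shows "\<bar>L x - L y\<bar> \<le> e"
  using assms unfolding real_projection_def by (metis ereal_less_eq(3) order_trans)

lemma abs_projection_le_walk_len:
  assumes L: "real_projection G L" and "walk G xs" "z \<in> set xs"
  shows "\<bar>L z - L (hd xs)\<bar> \<le> walk_len G xs"
  using assms(2,3)
proof (induction xs arbitrary: z rule: induct_list012)
  case (3 x y xs)
  have "x \<in> verts G" "(x, y) \<in> edges G" "walk G (y # xs)"
    using "3.prems"(1) by simp_all
  moreover from this have "y \<in> verts G"
    by (simp add: walk_def)
  ultimately have "\<bar>L x - L y\<bar> \<le> weight G x y"
    using gdist_le_walk_len[of G "[x, y]"] real_projection_abs_le[OF L] by simp
  moreover have IH: "\<bar>L z' - L y\<bar> \<le> walk_len G (y # xs)" if "z' \<in> set (y # xs)" for z'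
    using 3 that by simp
  moreover have "z = x \<or> z \<in> set (y # xs)"
    using "3.prems"(2) by simp
  ultimately show ?case
    using IH[of y] IH[of z] by (auto simp: abs_minus_commute)
qed auto

lemma gdist_induced_le:
  assumes L: "real_projection G L" and xy: "gdist G x y \<le> ereal e" and "e < m"
    and T: "{z \<in> verts G. \<bar>L z - L x\<bar> < m} \<subseteq> T"
  shows "gdist (induced G T) x y \<le> ereal e"
  unfolding gdist_le_iff
proof (intro allI impI)
  fix \<epsilon> :: real assume "\<epsilon> > 0"
  then have "min \<epsilon> (m - e) > 0" using \<open>e < m\<close> by simp
  then obtain xs where xs: "walk G xs" "hd xs = x" "last xs = y" "walk_len G xs < e + min \<epsilon> (m - e)"
    using xy unfolding gdist_le_iff by blast
  have "set xs \<subseteq> T"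
    using abs_projection_le_walk_len[OF L xs(1)] xs T by (fastforce simp: walk_def)
  with xs show "\<exists>xs. walk (induced G T) xs \<and> hd xs = x \<and> last xs = y \<and> walk_len (induced G T) xs < e + \<epsilon>"
    by (auto simp: walk_induced_iff)
qed

definition strip :: "'v wgraph \<Rightarrow> ('v \<Rightarrow> real) \<Rightarrow> real \<Rightarrow> real \<Rightarrow> 'v set" where
  "strip G L a b = {x \<in> verts G. a \<le> L x \<and> L x < b}"

lemma strip_subset: "a' \<le> a \<Longrightarrow> b \<le> b' \<Longrightarrow> strip G L a b \<subseteq> strip G L a' b'"
  by (auto simp: strip_def)

lemma strip_Un: "a \<le> b \<Longrightarrow> b \<le> c \<Longrightarrow> strip G L a b \<union> strip G L b c = strip G L a c"
  by (auto simp: strip_def)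

lemma mem_strip_floor:
  assumes "0 < P" "x \<in> verts G"
  shows "x \<in> strip G L (of_int \<lfloor>L x / P\<rfloor> * P) (of_int \<lfloor>L x / P\<rfloor> * P + P)"
  using assms floor_divide_lower[of P "L x"] floor_divide_upper[of P "L x"]
  by (simp add: strip_def algebra_simps)

lemma strips_far:
  assumes L: "real_projection G L"
    and x: "x \<in> strip G L a b" and y: "y \<in> strip G L a' b'" and "b + r \<le> a'"
  shows "ereal r < gdist G x y" "ereal r < gdist G y x"
proof -
  have "r < \<bar>L x - L y\<bar>" "r < \<bar>L y - L x\<bar>"
    using x y \<open>b + r \<le> a'\<close> by (auto simp: strip_def)
  with x y show "ereal r < gdist G x y" "ereal r < gdist G y x"
    using real_projection_abs_le[OF L] by (force simp: strip_def not_le[symmetric])+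
qed

section \<open>Absorbing pieces into nearby blocks\<close>

definition near :: "'v wgraph \<Rightarrow> real \<Rightarrow> 'v set \<Rightarrow> 'v set \<Rightarrow> bool" where
  "near G r A B \<longleftrightarrow> (\<exists>x\<in>A. \<exists>y\<in>B. gdist G x y \<le> ereal r)"

lemma r_disjoint_iff_not_near:
  "r_disjoint G r \<U> \<longleftrightarrow> (\<forall>A\<in>\<U>. \<forall>B\<in>\<U>. A \<noteq> B \<longrightarrow> \<not> near G r A B)"
  by (auto simp: r_disjoint_def near_def not_le)

lemma near_commute:
  assumes "finite_wgraph G"
  shows "near G r A B \<longleftrightarrow> near G r B A"
  unfolding near_def by (metis gdist_commute[OF assms])

definition absorbed :: "'v wgraph \<Rightarrow> real \<Rightarrow> 'v set set \<Rightarrow> 'v set \<Rightarrow> 'v set" where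
  "absorbed G r \<P> b = b \<union> \<Union>{p \<in> \<P>. near G r p b}"

definition absorb :: "'v wgraph \<Rightarrow> real \<Rightarrow> 'v set set \<Rightarrow> 'v set set \<Rightarrow> 'v set set" where
  "absorb G r \<P> \<B> = absorbed G r \<P> ` \<B> \<union> {p \<in> \<P>. \<forall>b\<in>\<B>. \<not> near G r p b}"

lemma Union_absorb: "\<Union>(absorb G r \<P> \<B>) = \<Union>\<B> \<union> \<Union>\<P>"
  unfolding absorb_def absorbed_def by blast

lemma near_absorbed_iff:
  "near G r (absorbed G r \<P> b) C \<longleftrightarrow> near G r b C \<or> (\<exists>p\<in>\<P>. near G r p b \<and> near G r p C)"
  "near G r C (absorbed G r \<P> b) \<longleftrightarrow> near G r C b \<or> (\<exists>p\<in>\<P>. near G r p b \<and> near G r C p)"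
  by (auto simp: absorbed_def near_def) blast

lemma absorbed_far:
  assumes G: "finite_wgraph G" and \<P>: "r_disjoint G r \<P>" and \<B>: "r_disjoint G r \<B>"
    and unique: "\<And>p b b'. p \<in> \<P> \<Longrightarrow> b \<in> \<B> \<Longrightarrow> b' \<in> \<B> \<Longrightarrow>
      near G r p b \<Longrightarrow> near G r p b' \<Longrightarrow> b = b'"
    and b: "b \<in> \<B>" "b' \<in> \<B>" "b \<noteq> b'"
  shows "\<not> near G r (absorbed G r \<P> b) (absorbed G r \<P> b')"
proof
  note sym = near_commute[OF G]
  assume "near G r (absorbed G r \<P> b) (absorbed G r \<P> b')"
  then consider "near G r b b'"
    | p' where "p' \<in> \<P>" "near G r p' b'" "near G r b p'"
    | p where "p \<in> \<P>" "near G r p b" "near G r p b'"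
    | p p' where "p \<in> \<P>" "near G r p b" "p' \<in> \<P>" "near G r p' b'" "near G r p p'"
    unfolding near_absorbed_iff by blast
  then show False
  proof cases
    case 1
    with \<B> b show False unfolding r_disjoint_iff_not_near by blast
  next
    case 2
    with sym have "near G r p' b" by blast
    with 2 unique b show False by blast
  next
    case 3
    with unique b show False by blast
  next
    case 4
    with unique b have "p \<noteq> p'" by blast
    with 4 \<P> show False unfolding r_disjoint_iff_not_near by blast
  qed
qed

lemma absorbed_lonely_far:
  assumes G: "finite_wgraph G" and \<P>: "r_disjoint G r \<P>"
    and p: "p \<in> \<P>" "\<forall>b\<in>\<B>. \<not> near G r p b" and "b \<in> \<B>"
  shows "\<not> near G r (absorbed G r \<P> b) p" "\<not> near G r p (absorbed G r \<P> b)"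
proof -
  show "\<not> near G r (absorbed G r \<P> b) p"
  proof
    assume "near G r (absorbed G r \<P> b) p"
    then consider "near G r b p" | p' where "p' \<in> \<P>" "near G r p' b" "near G r p' p"
      unfolding near_absorbed_iff by blast
    then show False
    proof cases
      case 1
      with near_commute[OF G] p \<open>b \<in> \<B>\<close> show False by blast
    next
      case 2
      with p \<open>b \<in> \<B>\<close> have "p' \<noteq> p" by blast
      with \<P> 2 p show False unfolding r_disjoint_iff_not_near by blast
    qed
  qed
  then show "\<not> near G r p (absorbed G r \<P> b)"
    using near_commute[OF G] by blast
qed

lemma absorb_r_disjoint:
  assumes G: "finite_wgraph G" and \<P>: "r_disjoint G r \<P>" and \<B>: "r_disjoint G r \<B>"
    and unique: "\<And>p b b'. p \<in> \<P> \<Longrightarrow> b \<in> \<B> \<Longrightarrow> b' \<in> \<B> \<Longrightarrow>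
      near G r p b \<Longrightarrow> near G r p b' \<Longrightarrow> b = b'"
  shows "r_disjoint G r (absorb G r \<P> \<B>)"
  unfolding r_disjoint_iff_not_near
proof (intro ballI impI)
  fix A B assume "A \<in> absorb G r \<P> \<B>" "B \<in> absorb G r \<P> \<B>" "A \<noteq> B"
  then consider (two_blocks) b b' where "b \<in> \<B>" "b' \<in> \<B>" "b \<noteq> b'"
      "A = absorbed G r \<P> b" "B = absorbed G r \<P> b'"
    | (block_lonely) b where "b \<in> \<B>" "A = absorbed G r \<P> b" "B \<in> \<P>" "\<forall>b\<in>\<B>. \<not> near G r B b"
    | (lonely_block) b where "b \<in> \<B>" "B = absorbed G r \<P> b" "A \<in> \<P>" "\<forall>b\<in>\<B>. \<not> near G r A b"
    | (two_lonely) "A \<in> \<P>" "B \<in> \<P>"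
    unfolding absorb_def by blast
  then show "\<not> near G r A B"
  proof cases
    case two_blocks
    then show ?thesis
      using absorbed_far[OF G \<P> \<B>] unique by blast
  next
    case block_lonely
    with absorbed_lonely_far(1)[OF G \<P>] show ?thesis by blast
  next
    case lonely_block
    with absorbed_lonely_far(2)[OF G \<P>] show ?thesis by blast
  next
    case two_lonely
    with \<P> \<open>A \<noteq> B\<close> show ?thesis unfolding r_disjoint_iff_not_near by blast
  qed
qed

lemma absorbed_close:
  assumes G: "finite_wgraph G" and \<P>: "D_bounded G DP \<P>"
    and "b \<subseteq> verts G" "0 \<le> DP" "0 \<le> r" and z: "z \<in> absorbed G r \<P> b"
  shows "\<exists>w\<in>b. gdist G z w \<le> ereal (DP + r) \<and> gdist G w z \<le> ereal (DP + r)"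
proof (cases "z \<in> b")
  case True
  with \<open>b \<subseteq> verts G\<close> have "gdist G z z \<le> 0"
    by (blast intro: gdist_self)
  also have "\<dots> \<le> ereal (DP + r)"
    using \<open>0 \<le> DP\<close> \<open>0 \<le> r\<close> by simp
  finally show ?thesis
    using True by blast
next
  case False
  then obtain p x y where "p \<in> \<P>" "z \<in> p" "x \<in> p" "y \<in> b" "gdist G x y \<le> ereal r"
    using z by (auto simp: absorbed_def near_def)
  with \<P> have "gdist G z x \<le> ereal DP"
    unfolding D_bounded_def by blast
  then have "gdist G z y \<le> ereal (DP + r)"
    using \<open>gdist G x y \<le> ereal r\<close> by (rule gdist_triangle)
  with \<open>y \<in> b\<close> gdist_commute[OF G] show ?thesis
    by metis
qed

lemma absorb_bounded:
  assumes G: "finite_wgraph G" and \<P>: "D_bounded G DP \<P>" and \<B>: "D_bounded G DB \<B>"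
    and "\<Union>\<B> \<subseteq> verts G" and "0 \<le> DP" "0 \<le> DB" "0 \<le> r"
  shows "D_bounded G (DB + 2 * (DP + r)) (absorb G r \<P> \<B>)"
  unfolding D_bounded_def
proof (intro ballI)
  fix A x y assume A: "A \<in> absorb G r \<P> \<B>" and "x \<in> A" "y \<in> A"
  from A consider b where "b \<in> \<B>" "A = absorbed G r \<P> b" | "A \<in> \<P>"
    unfolding absorb_def by auto
  then show "gdist G x y \<le> ereal (DB + 2 * (DP + r))"
  proof cases
    case 1
    have "b \<subseteq> verts G"
      using 1 \<open>\<Union>\<B> \<subseteq> verts G\<close> by blast
    with 1 absorbed_close[OF G \<P>] assms(5-) \<open>x \<in> A\<close> \<open>y \<in> A\<close> obtain v w where
      "v \<in> b" "w \<in> b" "gdist G x v \<le> ereal (DP + r)" "gdist G w y \<le> ereal (DP + r)"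
      by meson
    moreover from \<B> \<open>b \<in> \<B>\<close> \<open>v \<in> b\<close> \<open>w \<in> b\<close> have "gdist G v w \<le> ereal DB"
      unfolding D_bounded_def by blast
    ultimately have "gdist G x y \<le> ereal ((DP + r) + DB + (DP + r))"
      by (blast intro: gdist_triangle)
    then show ?thesis
      by (simp add: algebra_simps)
  next
    case 2
    with \<P> \<open>x \<in> A\<close> \<open>y \<in> A\<close> have "gdist G x y \<le> ereal DP"
      unfolding D_bounded_def by blast
    also have "\<dots> \<le> ereal (DB + 2 * (DP + r))"
      using \<open>0 \<le> DP\<close> \<open>0 \<le> DB\<close> \<open>0 \<le> r\<close> by simp
    finally show ?thesis .
  qed
qed

section \<open>Covers of strips\<close>

text \<open>Disjointness is only required as seen from the points of \<open>Y\<close>: this is what a cover of the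
  graph induced by a thickening of \<open>Y\<close> provides.\<close>
definition relative_cover ::
    "'v wgraph \<Rightarrow> nat \<Rightarrow> real \<Rightarrow> real \<Rightarrow> 'v set \<Rightarrow> (nat \<Rightarrow> 'v set set) \<Rightarrow> bool" where
  "relative_cover G n r D Y U \<longleftrightarrow>
     Y \<subseteq> (\<Union>i\<le>n. \<Union>(U i)) \<and>
     (\<forall>i\<le>n. \<forall>X\<in>U i. \<forall>X'\<in>U i. X \<noteq> X' \<longrightarrow> (\<forall>x\<in>X \<inter> Y. \<forall>y\<in>X'. ereal r < gdist G x y)) \<and>
     (\<forall>i\<le>n. D_bounded G D (U i))"

lemma relative_cover_covers:
  assumes "relative_cover G n r D Y U" "x \<in> Y"
  shows "\<exists>i\<le>n. \<exists>X\<in>U i. x \<in> X"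
proof -
  from assms have "x \<in> (\<Union>i\<le>n. \<Union>(U i))"
    unfolding relative_cover_def by blast
  then show ?thesis
    by (simp add: Bex_def)
qed

lemma relative_cover_far:
  "relative_cover G n r D Y U \<Longrightarrow> i \<le> n \<Longrightarrow> X \<in> U i \<Longrightarrow> X' \<in> U i \<Longrightarrow> X \<noteq> X' \<Longrightarrow>
    x \<in> X \<Longrightarrow> x \<in> Y \<Longrightarrow> y \<in> X' \<Longrightarrow> ereal r < gdist G x y"
  by (simp add: relative_cover_def)

lemma relative_cover_bounded:
  "relative_cover G n r D Y U \<Longrightarrow> i \<le> n \<Longrightarrow> X \<in> U i \<Longrightarrow> x \<in> X \<Longrightarrow> y \<in> X \<Longrightarrow>
    gdist G x y \<le> ereal D"
  by (simp add: relative_cover_def D_bounded_def)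

lemma relative_cover_strip:
  assumes L: "real_projection G L" and "0 < \<rho>"
    and D: "control_fun D n (induced G (strip G L (a - 2 * \<rho>) (b + 2 * \<rho>)))"
  shows "\<exists>U. relative_cover G n \<rho> (D \<rho>) (strip G L a b) U"
proof -
  define H where "H = induced G (strip G L (a - 2 * \<rho>) (b + 2 * \<rho>))"
  from D[folded H_def, unfolded control_fun_def, THEN conjunct2, rule_format, OF \<open>0 < \<rho>\<close>]
  obtain U where cover: "(\<Union>i<Suc n. \<Union>(U i)) = verts H"
    and far: "\<forall>i<Suc n. r_disjoint H \<rho> (U i)"
    and bounded: "\<forall>i<Suc n. D_bounded H (D \<rho>) (U i)"
    by blast
  show ?thesis
    unfolding relative_cover_def
  proof (intro exI[of _ U] conjI allI impI ballI)
    have "strip G L a b \<subseteq> verts H"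
      using \<open>0 < \<rho>\<close> by (auto simp: H_def induced_def strip_def)
    with cover show "strip G L a b \<subseteq> (\<Union>i\<le>n. \<Union>(U i))"
      by (simp add: lessThan_Suc_atMost)
  next
    fix i X X' x y
    assume "i \<le> n" "X \<in> U i" "X' \<in> U i" "X \<noteq> X'" "x \<in> X \<inter> strip G L a b" "y \<in> X'"
    then have "ereal \<rho> < gdist H x y"
      using far by (intro r_disjointD[of H \<rho> "U i" X X']) simp_all
    moreover have "gdist H x y \<le> ereal \<rho>" if "gdist G x y \<le> ereal \<rho>"
      unfolding H_def
    proof (rule gdist_induced_le[OF L that])
      show "\<rho> < 2 * \<rho>"
        using \<open>0 < \<rho>\<close> by simp
      show "{z \<in> verts G. \<bar>L z - L x\<bar> < 2 * \<rho>} \<subseteq> strip G L (a - 2 * \<rho>) (b + 2 * \<rho>)"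
        using \<open>x \<in> X \<inter> strip G L a b\<close> by (auto simp: strip_def)
    qed
    ultimately show "ereal \<rho> < gdist G x y"
      by (meson not_le)
  next
    fix i assume "i \<le> n"
    with bounded have "D_bounded H (D \<rho>) (U i)"
      by simp
    then show "D_bounded G (D \<rho>) (U i)"
      unfolding D_bounded_def H_def by (meson gdist_le_gdist_induced order_trans)
  qed
qed

section \<open>The cover of a layered graph\<close>

locale layered_covers =
  fixes G :: "'v wgraph" and L :: "'v \<Rightarrow> real" and n :: nat and r DS DB :: real
    and US UB :: "int \<Rightarrow> nat \<Rightarrow> 'v set set"
    and P :: real and Wide Narrow :: "int \<Rightarrow> 'v set"
  defines P_def: "P \<equiv> 2 * r * (real n + 2)"
    and Wide_def: "Wide k \<equiv> strip G L (of_int k * P) (of_int k * P + P - 2 * r)"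
    and Narrow_def: "Narrow k \<equiv> strip G L (of_int k * P + P - 2 * r) (of_int k * P + P)"
  assumes G: "finite_wgraph G" and L: "real_projection G L"
    and r: "0 < r" and DS: "0 \<le> DS" and DB: "0 \<le> DB"
    and US: "\<And>k. relative_cover G n r DS (Wide k) (US k)"
    and UB: "\<And>k. relative_cover G n (2 * r + DS) DB (Narrow k) (UB k)"
begin

definition Left :: "int \<Rightarrow> nat \<Rightarrow> 'v set" where
  "Left k j = strip G L (of_int k * P) (of_int k * P + r + 2 * r * real j)"

definition Cut :: "int \<Rightarrow> nat \<Rightarrow> 'v set" where
  "Cut k j = strip G L (of_int k * P + r + 2 * r * real j) (of_int k * P + 2 * r + 2 * r * real j)"

definition Right :: "int \<Rightarrow> nat \<Rightarrow> 'v set" where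
  "Right k j = strip G L (of_int k * P + 2 * r + 2 * r * real j) (of_int k * P + P - 2 * r)"

definition Pieces :: "nat \<Rightarrow> 'v set set" where
  "Pieces j = {X \<inter> Left k j | k X. X \<in> US k j} \<union> {X \<inter> Right k j | k X. X \<in> US k j}"

definition Blocks :: "nat \<Rightarrow> 'v set set" where
  "Blocks j = {Y \<inter> Narrow k | k Y. Y \<in> UB k j}"

definition Cuts :: "'v set set" where
  "Cuts = {X \<inter> Cut k j | k j X. j \<le> n \<and> X \<in> US k j}"

definition colour :: "nat \<Rightarrow> 'v set set" where
  "colour i = (if i \<le> n then absorb G r (Pieces i) (Blocks i) else Cuts)"

lemma P_ge: "4 * r \<le> P"
  using r by (simp add: P_def algebra_simps)

lemma window_le: "j \<le> n \<Longrightarrow> 2 * r + 2 * r * real j \<le> P - 2 * r"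
  using r by (simp add: P_def algebra_simps)

lemma period_mono: "k \<le> k' \<Longrightarrow> of_int k * P \<le> of_int k' * P"
  using P_ge r by (intro mult_right_mono) simp_all

lemma period_step: "k < k' \<Longrightarrow> of_int k * P + P \<le> of_int k' * P"
  using period_mono[of "k + 1" k'] by (simp add: algebra_simps)

lemma Wide_far:
  assumes "k \<noteq> k'" "x \<in> Wide k" "y \<in> Wide k'"
  shows "ereal r < gdist G x y"
proof (cases "k < k'")
  case True
  with r have "of_int k * P + P - 2 * r + r \<le> of_int k' * P"
    using period_step by force
  with assms show ?thesis
    unfolding Wide_def by (intro strips_far(1)[OF L])
next
  case False
  with \<open>k \<noteq> k'\<close> r have "of_int k' * P + P - 2 * r + r \<le> of_int k * P"
    using period_step[of k' k] by force
  with assms show ?thesis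
    unfolding Wide_def by (intro strips_far(2)[OF L])
qed

lemma Narrow_far:
  assumes "k \<noteq> k'" "x \<in> Narrow k" "y \<in> Narrow k'"
  shows "ereal r < gdist G x y"
proof (cases "k < k'")
  case True
  with P_ge r have "of_int k * P + P + r \<le> of_int k' * P + P - 2 * r"
    using period_step by force
  with assms show ?thesis
    unfolding Narrow_def by (intro strips_far(1)[OF L])
next
  case False
  with \<open>k \<noteq> k'\<close> P_ge r have "of_int k' * P + P + r \<le> of_int k * P + P - 2 * r"
    using period_step[of k' k] by force
  with assms show ?thesis
    unfolding Narrow_def by (intro strips_far(2)[OF L])
qed

lemma Left_Right_far:
  assumes "x \<in> Left k j" "y \<in> Right k j"
  shows "ereal r < gdist G x y" "ereal r < gdist G y x"
  using strips_far[OF L, of x _ _ y "_ + 2 * r + 2 * r * real j"] assms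
  unfolding Left_def Right_def by simp_all

lemma Cut_far:
  assumes "j \<noteq> j'" "x \<in> Cut k j" "y \<in> Cut k j'"
  shows "ereal r < gdist G x y"
proof (cases "j < j'")
  case True
  with r have "2 * r * (real j + 1) \<le> 2 * r * real j'"
    by (intro mult_left_mono) auto
  then have "of_int k * P + 2 * r + 2 * r * real j + r \<le> of_int k * P + r + 2 * r * real j'"
    by (simp add: algebra_simps)
  with assms show ?thesis
    unfolding Cut_def by (intro strips_far(1)[OF L])
next
  case False
  with \<open>j \<noteq> j'\<close> r have "2 * r * (real j' + 1) \<le> 2 * r * real j"
    by (intro mult_left_mono) auto
  then have "of_int k * P + 2 * r + 2 * r * real j' + r \<le> of_int k * P + r + 2 * r * real j"
    by (simp add: algebra_simps)
  with assms show ?thesis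
    unfolding Cut_def by (intro strips_far(2)[OF L])
qed

lemma Left_near_Narrow:
  assumes "j \<le> n" "x \<in> Left k j" "y \<in> Narrow k'" "gdist G x y \<le> ereal r"
  shows "k' = k - 1"
proof (rule ccontr)
  assume "k' \<noteq> k - 1"
  then consider "k \<le> k'" | "k' + 1 < k"
    by linarith
  then show False
  proof cases
    case 1
    with window_le[OF \<open>j \<le> n\<close>] have "of_int k * P + r + 2 * r * real j + r \<le> of_int k' * P + P - 2 * r"
      using period_mono by force
    with assms show False
      unfolding Left_def Narrow_def using strips_far(1)[OF L] by (meson not_le)
  next
    case 2
    with P_ge r have "of_int k' * P + P + r \<le> of_int k * P"
      using period_step[of "k' + 1" k] by (simp add: algebra_simps)
    with assms show False
      unfolding Left_def Narrow_def using strips_far(2)[OF L] by (meson not_le)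
  qed
qed

lemma Right_near_Narrow:
  assumes "x \<in> Right k j" "y \<in> Narrow k'" "gdist G x y \<le> ereal r"
  shows "k' = k"
proof (rule ccontr)
  assume "k' \<noteq> k"
  then consider "k < k'" | "k' < k"
    by linarith
  then show False
  proof cases
    case 1
    with P_ge r have "of_int k * P + P - 2 * r + r \<le> of_int k' * P + P - 2 * r"
      using period_step[of k k'] by linarith
    with assms show False
      unfolding Right_def Narrow_def using strips_far(1)[OF L] by (meson not_le)
  next
    case 2
    moreover have "0 \<le> 2 * r * real j"
      using r by simp
    ultimately have "of_int k' * P + P + r \<le> of_int k * P + 2 * r + 2 * r * real j"
      using period_step[of k' k] r by linarith
    with assms show False
      unfolding Right_def Narrow_def using strips_far(2)[OF L] by (meson not_le)
  qed
qed

lemma Left_subset_Wide: "j \<le> n \<Longrightarrow> Left k j \<subseteq> Wide k"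
  using window_le[of j] r unfolding Left_def Wide_def by (intro strip_subset) auto

lemma Right_subset_Wide: "Right k j \<subseteq> Wide k"
  using r unfolding Right_def Wide_def by (intro strip_subset) auto

lemma Cut_subset_Wide: "j \<le> n \<Longrightarrow> Cut k j \<subseteq> Wide k"
  using window_le[of j] r unfolding Cut_def Wide_def by (intro strip_subset) auto

lemma Wide_eq: "j \<le> n \<Longrightarrow> Wide k = Left k j \<union> Cut k j \<union> Right k j"
  using window_le[of j] r unfolding Left_def Cut_def Right_def Wide_def
  by (simp add: strip_Un)

lemma Pieces_cases:
  assumes "p \<in> Pieces j"
  obtains (left) k X where "X \<in> US k j" "p = X \<inter> Left k j"
    | (right) k X where "X \<in> US k j" "p = X \<inter> Right k j"
  using assms unfolding Pieces_def by blast

lemma Pieces_r_disjoint: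
  assumes "j \<le> n"
  shows "r_disjoint G r (Pieces j)"
  unfolding r_disjoint_def
proof (intro ballI impI)
  fix p p' x y assume p: "p \<in> Pieces j" "p' \<in> Pieces j" "p \<noteq> p'" "x \<in> p" "y \<in> p'"
  obtain k X where X: "X \<in> US k j" "p = X \<inter> Left k j \<or> p = X \<inter> Right k j"
    using p(1) by (cases rule: Pieces_cases) auto
  obtain k' X' where X': "X' \<in> US k' j" "p' = X' \<inter> Left k' j \<or> p' = X' \<inter> Right k' j"
    using p(2) by (cases rule: Pieces_cases) auto
  have x: "x \<in> X" "x \<in> Wide k" and y: "y \<in> X'" "y \<in> Wide k'"
    using X X' p Left_subset_Wide[OF assms] Right_subset_Wide by blast+
  consider "k \<noteq> k'" | "k = k'" "X \<noteq> X'" | "k = k'" "X = X'"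
    by blast
  then show "ereal r < gdist G x y"
  proof cases
    case 1
    from this x(2) y(2) show ?thesis by (rule Wide_far)
  next
    case 2
    with US X X' x y assms show ?thesis
      by (intro relative_cover_far[of G n r DS "Wide k" "US k" j X X']) auto
  next
    case 3
    with X X' p have "x \<in> Left k j \<and> y \<in> Right k j \<or> x \<in> Right k j \<and> y \<in> Left k j"
      by blast
    then show ?thesis
      using Left_Right_far by blast
  qed
qed

lemma Blocks_r_disjoint:
  assumes "j \<le> n"
  shows "r_disjoint G r (Blocks j)"
  unfolding r_disjoint_def
proof (intro ballI impI)
  fix b b' x y assume b: "b \<in> Blocks j" "b' \<in> Blocks j" "b \<noteq> b'" "x \<in> b" "y \<in> b'"
  obtain k Y k' Y' where "Y \<in> UB k j" "b = Y \<inter> Narrow k" "Y' \<in> UB k' j" "b' = Y' \<inter> Narrow k'"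
    using b(1,2) unfolding Blocks_def by blast
  show "ereal r < gdist G x y"
  proof (cases "k = k'")
    case True
    with b \<open>b = Y \<inter> Narrow k\<close> \<open>b' = Y' \<inter> Narrow k'\<close> UB \<open>Y \<in> UB k j\<close> \<open>Y' \<in> UB k' j\<close> assms
    have "ereal (2 * r + DS) < gdist G x y"
      by (intro relative_cover_far[of G n "2 * r + DS" DB "Narrow k" "UB k" j Y Y']) auto
    moreover have "ereal r \<le> ereal (2 * r + DS)"
      using r DS by simp
    ultimately show ?thesis
      by order
  next
    case False
    with b \<open>b = Y \<inter> Narrow k\<close> \<open>b' = Y' \<inter> Narrow k'\<close> show ?thesis
      by (blast intro: Narrow_far)
  qed
qed

lemma Pieces_near_Blocks_unique:
  assumes "j \<le> n" "p \<in> Pieces j" "b \<in> Blocks j" "b' \<in> Blocks j" "near G r p b" "near G r p b'"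
  shows "b = b'"
proof -
  obtain k Y k' Y' where Y: "Y \<in> UB k j" "b = Y \<inter> Narrow k" and Y': "Y' \<in> UB k' j" "b' = Y' \<inter> Narrow k'"
    using assms(3,4) unfolding Blocks_def by blast
  obtain x y x' y' where xy: "x \<in> p" "y \<in> b" "gdist G x y \<le> ereal r"
    and xy': "x' \<in> p" "y' \<in> b'" "gdist G x' y' \<le> ereal r"
    using assms(5,6) unfolding near_def by blast
  obtain kp X where X: "X \<in> US kp j" "p \<subseteq> X" and "k = k'"
    using assms(2)
  proof (cases rule: Pieces_cases)
    case (left kp X)
    with Left_near_Narrow[OF assms(1)] Y Y' xy xy' have "k = kp - 1" "k' = kp - 1"
      by blast+
    with left that show ?thesis by blast
  next
    case (right kp X)
    with Right_near_Narrow Y Y' xy xy' have "k = kp" "k' = kp"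
      by blast+
    with right that show ?thesis by blast
  qed
  have "gdist G y x \<le> ereal r"
    using xy(3) gdist_commute[OF G] by simp
  moreover have "gdist G x x' \<le> ereal DS"
    using relative_cover_bounded[OF US assms(1) X(1)] X(2) xy(1) xy'(1) by blast
  ultimately have "gdist G y y' \<le> ereal (r + DS + r)"
    using xy'(3) by (blast intro: gdist_triangle)
  show "b = b'"
  proof (rule ccontr)
    assume "b \<noteq> b'"
    with Y Y' \<open>k = k'\<close> have "Y \<noteq> Y'"
      by blast
    with Y Y' \<open>k = k'\<close> xy(2) xy'(2) have "ereal (2 * r + DS) < gdist G y y'"
      using UB[of k] assms(1)
      by (intro relative_cover_far[of G n "2 * r + DS" DB "Narrow k" "UB k" j Y Y']) auto
    with \<open>gdist G y y' \<le> ereal (r + DS + r)\<close> show False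
      by (simp add: algebra_simps)
  qed
qed

lemma Cuts_r_disjoint: "r_disjoint G r Cuts"
  unfolding r_disjoint_def
proof (intro ballI impI)
  fix A A' x y assume A: "A \<in> Cuts" "A' \<in> Cuts" "A \<noteq> A'" "x \<in> A" "y \<in> A'"
  obtain k j X k' j' X' where X: "j \<le> n" "X \<in> US k j" "A = X \<inter> Cut k j"
    and X': "j' \<le> n" "X' \<in> US k' j'" "A' = X' \<inter> Cut k' j'"
    using A(1,2) unfolding Cuts_def by blast
  consider "k \<noteq> k'" | "k = k'" "j \<noteq> j'" | "k = k'" "j = j'" "X \<noteq> X'"
    using A(3) X(3) X'(3) by blast
  then show "ereal r < gdist G x y"
  proof cases
    case 1
    moreover have "x \<in> Wide k" "y \<in> Wide k'"
      using A X X' Cut_subset_Wide by blast+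
    ultimately show ?thesis
      by (rule Wide_far)
  next
    case 2
    with A X X' show ?thesis
      by (blast intro: Cut_far)
  next
    case 3
    with A X X' Cut_subset_Wide[OF X(1)] show ?thesis
      using US[of k] by (intro relative_cover_far[of G n r DS "Wide k" "US k" j X X']) auto
  qed
qed

lemma Pieces_bounded: "j \<le> n \<Longrightarrow> D_bounded G DS (Pieces j)"
  unfolding D_bounded_def Pieces_def by (auto intro: relative_cover_bounded[OF US])

lemma Blocks_bounded: "j \<le> n \<Longrightarrow> D_bounded G DB (Blocks j)"
  unfolding D_bounded_def Blocks_def by (auto intro: relative_cover_bounded[OF UB])

lemma Cuts_bounded: "D_bounded G DS Cuts"
  unfolding D_bounded_def Cuts_def by (auto intro: relative_cover_bounded[OF US])

lemma colour_r_disjoint: "r_disjoint G r (colour i)"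
  unfolding colour_def
  using absorb_r_disjoint[OF G Pieces_r_disjoint Blocks_r_disjoint Pieces_near_Blocks_unique]
    Cuts_r_disjoint
  by simp

lemma colour_bounded: "D_bounded G (DB + 2 * (DS + r)) (colour i)"
proof (cases "i \<le> n")
  case True
  have "\<Union>(Blocks i) \<subseteq> verts G"
    unfolding Blocks_def Narrow_def strip_def by blast
  with True show ?thesis
    unfolding colour_def
    using absorb_bounded[OF G Pieces_bounded Blocks_bounded] DS DB r by simp
next
  case False
  have "DS \<le> DB + 2 * (DS + r)"
    using DS DB r by simp
  from D_bounded_mono[OF this Cuts_bounded] False show ?thesis
    unfolding colour_def by simp
qed

lemma Union_colour:
  "i \<le> n \<Longrightarrow> \<Union>(colour i) = \<Union>(Blocks i) \<union> \<Union>(Pieces i)"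
  "\<Union>(colour (Suc n)) = \<Union>Cuts"
  by (simp_all add: colour_def Union_absorb)

lemma colour_subset_verts: "X \<in> colour i \<Longrightarrow> X \<subseteq> verts G"
  unfolding colour_def
  by (auto split: if_splits simp: absorb_def absorbed_def Pieces_def Blocks_def Cuts_def
      Left_def Right_def Narrow_def Cut_def strip_def)

lemma verts_subset_colours: "verts G \<subseteq> (\<Union>i\<le>Suc n. \<Union>(colour i))"
proof
  fix x assume "x \<in> verts G"
  define k where "k = \<lfloor>L x / P\<rfloor>"
  have "x \<in> strip G L (of_int k * P) (of_int k * P + P)"
    unfolding k_def using mem_strip_floor[OF _ \<open>x \<in> verts G\<close>] P_ge r by simp
  also have "\<dots> = Wide k \<union> Narrow k"
    unfolding Wide_def Narrow_def using P_ge r by (simp add: strip_Un)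
  finally consider "x \<in> Wide k" | "x \<in> Narrow k"
    by blast
  then obtain j where "j \<le> Suc n" "x \<in> \<Union>(colour j)"
  proof cases
    case 1
    then obtain j X where "j \<le> n" "X \<in> US k j" "x \<in> X"
      using relative_cover_covers[OF US] by blast
    moreover have "X \<inter> Left k j \<in> Pieces j" "X \<inter> Right k j \<in> Pieces j" "X \<inter> Cut k j \<in> Cuts"
      using \<open>j \<le> n\<close> \<open>X \<in> US k j\<close> unfolding Pieces_def Cuts_def by blast+
    moreover have "x \<in> Left k j \<union> Cut k j \<union> Right k j"
      using 1 Wide_eq[OF \<open>j \<le> n\<close>] by blast
    ultimately have "x \<in> \<Union>(Pieces j) \<or> x \<in> \<Union>Cuts"
      by blast
    with \<open>j \<le> n\<close> have "x \<in> \<Union>(colour j) \<or> x \<in> \<Union>(colour (Suc n))"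
      unfolding Union_colour(1)[OF \<open>j \<le> n\<close>] Union_colour(2) by blast
    with \<open>j \<le> n\<close> that show ?thesis
      by (meson le_SucI order_refl)
  next
    case 2
    then obtain j Y where "j \<le> n" "Y \<in> UB k j" "x \<in> Y"
      using relative_cover_covers[OF UB] by blast
    then have "x \<in> \<Union>(Blocks j)"
      using 2 unfolding Blocks_def by blast
    then have "x \<in> \<Union>(colour j)"
      unfolding Union_colour(1)[OF \<open>j \<le> n\<close>] by blast
    with \<open>j \<le> n\<close> that show ?thesis
      by (meson le_SucI)
  qed
  then show "x \<in> (\<Union>i\<le>Suc n. \<Union>(colour i))"
    by auto
qed

lemma colour_cover:
  "(\<forall>i<Suc (Suc n). \<forall>X\<in>colour i. X \<subseteq> verts G) \<and>
   (\<Union>i<Suc (Suc n). \<Union>(colour i)) = verts G \<and>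
   (\<forall>i<Suc (Suc n). r_disjoint G r (colour i)) \<and>
   (\<forall>i<Suc (Suc n). D_bounded G (DB + 2 * (DS + r)) (colour i))"
  using colour_subset_verts verts_subset_colours colour_r_disjoint colour_bounded
  unfolding lessThan_Suc_atMost by blast

end

section \<open>Control functions of layerable classes\<close>

text \<open>A wide strip has width \<open>2r(n+1)\<close> and its \<open>2r\<close>-thickening width \<open>2r(n+3)\<close>; a narrow strip
  has width \<open>2r\<close> and is covered at scale \<open>R = 2r + wide_diam\<close>.\<close>
definition wide_diam :: "(nat \<Rightarrow> real \<Rightarrow> real) \<Rightarrow> (real \<Rightarrow> nat) \<Rightarrow> nat \<Rightarrow> real \<Rightarrow> real" where
  "wide_diam D f n r = D (f (2 * r * (real n + 3))) r"

definition narrow_diam :: "(nat \<Rightarrow> real \<Rightarrow> real) \<Rightarrow> (real \<Rightarrow> nat) \<Rightarrow> nat \<Rightarrow> real \<Rightarrow> real" where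
  "narrow_diam D f n r = (let R = 2 * r + wide_diam D f n r in D (f (2 * r + 4 * R)) R)"

definition layered_control :: "(nat \<Rightarrow> real \<Rightarrow> real) \<Rightarrow> (real \<Rightarrow> nat) \<Rightarrow> nat \<Rightarrow> real \<Rightarrow> real" where
  "layered_control D f n r = narrow_diam D f n r + 2 * (wide_diam D f n r + r)"

lemma layer_strip_relative_cover:
  assumes L: "real_projection G L"
    and layer: "\<forall>S>0. \<forall>A. inf_S_bounded G L S A \<longrightarrow> induced G A \<in> Ls (f S)"
    and D: "\<And>i. control_fun_class (D i) n (Ls i)" and "0 \<le> w" "0 < \<rho>"
  shows "\<exists>U. relative_cover G n \<rho> (D (f (w + 4 * \<rho>)) \<rho>) (strip G L a (a + w)) U"
proof (rule relative_cover_strip[OF L \<open>0 < \<rho>\<close>, where D = "D (f (w + 4 * \<rho>))"])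
  have "inf_S_bounded G L (w + 4 * \<rho>) (strip G L (a - 2 * \<rho>) (a + w + 2 * \<rho>))"
    by (auto simp: inf_S_bounded_def strip_def abs_le_iff)
  with layer \<open>0 \<le> w\<close> \<open>0 < \<rho>\<close>
  have "induced G (strip G L (a - 2 * \<rho>) (a + w + 2 * \<rho>)) \<in> Ls (f (w + 4 * \<rho>))"
    by simp
  with D show "control_fun (D (f (w + 4 * \<rho>))) n (induced G (strip G L (a - 2 * \<rho>) (a + w + 2 * \<rho>)))"
    unfolding control_fun_class_def by blast
qed

lemma layered_control_fun:
  assumes G: "finite_wgraph G" and L: "real_projection G L"
    and layer: "\<forall>S>0. \<forall>A. inf_S_bounded G L S A \<longrightarrow> induced G A \<in> Ls (f S)"
    and D: "\<And>i. control_fun_class (D i) n (Ls i)" and D_pos: "\<And>i r. 0 < r \<Longrightarrow> 0 < D i r"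
  shows "control_fun (layered_control D f n) (Suc n) G"
  unfolding control_fun_def
proof (intro conjI allI impI)
  fix r :: real assume "0 < r"
  define DS where "DS = wide_diam D f n r"
  define DB where "DB = narrow_diam D f n r"
  have "0 < DS" "0 < DB"
    using D_pos \<open>0 < r\<close> unfolding DS_def DB_def narrow_diam_def wide_diam_def Let_def
    by (simp_all add: add_pos_pos)
  then show "0 < layered_control D f n r"
    using \<open>0 < r\<close> unfolding layered_control_def DS_def DB_def by simp
  define P where "P = 2 * r * (real n + 2)"
  define Wide where "Wide k = strip G L (of_int k * P) (of_int k * P + P - 2 * r)" for k :: int
  define Narrow where "Narrow k = strip G L (of_int k * P + P - 2 * r) (of_int k * P + P)" for k :: int
  have "DS = D (f ((P - 2 * r) + 4 * r)) r" "0 \<le> P - 2 * r"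
    using \<open>0 < r\<close> unfolding DS_def wide_diam_def P_def by (simp_all add: algebra_simps)
  then have "\<forall>k. \<exists>U. relative_cover G n r DS (Wide k) U"
    using layer_strip_relative_cover[where D = D, OF L layer D, of "P - 2 * r" r] \<open>0 < r\<close>
    unfolding Wide_def by (simp add: add_diff_eq)
  then obtain US where US: "\<And>k. relative_cover G n r DS (Wide k) (US k)"
    by metis
  have "\<exists>U. relative_cover G n (2 * r + DS) DB (Narrow k) U" for k
    using layer_strip_relative_cover[where D = D and a = "of_int k * P + P - 2 * r", OF L layer D,
        of "2 * r" "2 * r + DS"] \<open>0 < r\<close> \<open>0 < DS\<close>
    unfolding Narrow_def DB_def narrow_diam_def DS_def[symmetric] Let_def by simp
  then obtain UB where UB: "\<And>k. relative_cover G n (2 * r + DS) DB (Narrow k) (UB k)"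
    by metis
  interpret layered_covers G L n r DS DB US UB P Wide Narrow
    using G L \<open>0 < r\<close> \<open>0 < DS\<close> \<open>0 < DB\<close> US UB
    by unfold_locales (simp_all add: P_def Wide_def Narrow_def)
  show "\<exists>U. (\<forall>i<Suc (Suc n). \<forall>X\<in>U i. X \<subseteq> verts G) \<and>
      (\<Union>i<Suc (Suc n). \<Union>(U i)) = verts G \<and>
      (\<forall>i<Suc (Suc n). r_disjoint G r (U i)) \<and>
      (\<forall>i<Suc (Suc n). D_bounded G (layered_control D f n r) (U i))"
    using colour_cover unfolding layered_control_def DS_def DB_def by blast
qed

text \<open>Control functions of an empty class need not be positive; \<open>max (D r) r\<close> is.\<close>
lemma control_fun_class_max:
  assumes "control_fun_class D n \<C>"
  shows "control_fun_class (\<lambda>r. max (D r) r) n \<C>"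
proof -
  have "D_bounded G (max (D r) r) U" if "D_bounded G (D r) U" for G r U
    using that by (rule D_bounded_mono[rotated]) simp
  with assms show ?thesis
    unfolding control_fun_class_def control_fun_def by (metis max.strict_coboundedI2)
qed

lemma control_fun_class_layered:
  assumes C: "\<forall>G\<in>C. finite_wgraph G" and f: "layerable_with C Ls f"
    and D: "\<And>i. control_fun_class (D i) n (Ls i)"
  shows "control_fun_class (layered_control (\<lambda>i r. max (D i r) r) f n) (Suc n) C"
  unfolding control_fun_class_def
proof
  fix G assume "G \<in> C"
  with f obtain L where "real_projection G L"
    and "\<forall>S>0. \<forall>A. inf_S_bounded G L S A \<longrightarrow> induced G A \<in> Ls (f S)"
    unfolding layerable_with_def by blast
  with C \<open>G \<in> C\<close> control_fun_class_max[OF D]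
  show "control_fun (layered_control (\<lambda>i r. max (D i r) r) f n) (Suc n) G"
    by (intro layered_control_fun) auto
qed

lemma layered_coefficient_le:
  fixes a t N :: real
  assumes a: "1 \<le> a" and t: "1 \<le> t" and N: "0 \<le> N"
  shows "(a + 4 * t) * (2 + a + 2 * t * (N + 3)) + 2 * t + 2 * (a + 2 * t * (N + 3)) + 2
    \<le> 20 * (6 * (a + 2 * t)^2 + (a + 2 * t) * t * (N + 4))"
proof -
  have "0 \<le> t * N"
    using t N by simp
  then have "a \<le> a * a" "t \<le> t * t" "t * N \<le> t * (t * N)" "0 \<le> a * (t * N)" "0 \<le> a * t"
    using a t mult_right_mono[of 1 a a] mult_right_mono[of 1 t t] mult_right_mono[of 1 t "t * N"]
    by simp_all
  moreover have "(a + 4 * t) * (2 + a + 2 * t * (N + 3)) + 2 * t + 2 * (a + 2 * t * (N + 3)) + 2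
      = a * a + 2 * (a * (t * N)) + 10 * (a * t) + 4 * a + 8 * (t * (t * N)) + 24 * (t * t) + 22 * t + 4 * (t * N) + 2"
    by (simp add: algebra_simps)
  moreover have "20 * (6 * (a + 2 * t)^2 + (a + 2 * t) * t * (N + 4))
      = 120 * (a * a) + 560 * (a * t) + 640 * (t * t) + 20 * (a * (t * N)) + 40 * (t * (t * N))"
    by (simp add: algebra_simps power2_eq_square)
  ultimately show ?thesis
    using a t \<open>0 \<le> t * N\<close> by linarith
qed

locale linear_layering =
  fixes a b c d :: real and D :: "nat \<Rightarrow> real \<Rightarrow> real" and f :: "real \<Rightarrow> nat"
  assumes a: "1 \<le> a" and b: "1 \<le> b" and c: "1 \<le> c" and d: "0 \<le> d"
    and f_le: "\<And>S. 0 < S \<Longrightarrow> real (f S) \<le> c * S"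
    and D_pos: "\<And>i \<rho>. 0 < \<rho> \<Longrightarrow> 0 < D i \<rho>"
    and D_le: "\<And>i \<rho>. 0 < \<rho> \<Longrightarrow> D i \<rho> \<le> a * \<rho> + b * real i + d"
begin

lemma D_f_le:
  assumes "0 < S" "0 < \<rho>"
  shows "D (f S) \<rho> \<le> a * \<rho> + b * c * S + d"
proof -
  have "b * real (f S) \<le> b * (c * S)"
    using f_le[OF \<open>0 < S\<close>] b by (intro mult_left_mono) auto
  with D_le[OF \<open>0 < \<rho>\<close>, of "f S"] show ?thesis
    by (simp add: mult.assoc)
qed

lemma wide_diam_le:
  assumes "0 < r"
  shows "wide_diam D f n r \<le> (a + 2 * (b * c) * (real n + 3)) * r + d"
proof -
  have "0 < 2 * r * (real n + 3)"
    using assms by simp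
  from D_f_le[OF this assms] show ?thesis
    unfolding wide_diam_def by (simp add: algebra_simps)
qed

lemma narrow_diam_le:
  assumes "0 < r"
  shows "narrow_diam D f n r \<le> (a + 4 * (b * c)) * (2 * r + wide_diam D f n r) + 2 * (b * c) * r + d"
proof -
  have "0 < 2 * r + wide_diam D f n r"
    using assms D_pos unfolding wide_diam_def by (simp add: add_pos_pos)
  with assms D_f_le[of "2 * r + 4 * (2 * r + wide_diam D f n r)" "2 * r + wide_diam D f n r"]
  show ?thesis
    unfolding narrow_diam_def Let_def by (simp add: algebra_simps)
qed

lemma layered_control_le:
  assumes "0 < r"
  shows "layered_control D f n r
    \<le> 20 * (6 * (a + 2 * b * c)^2 + (a + 2 * b * c) * b * c * (real n + 4)) * r + (a + 4 * b * c + 3) * d"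
proof -
  define \<sigma> where "\<sigma> = a + 2 * (b * c) * (real n + 3)"
  have "1 \<le> b * c"
    using b c mult_mono[of 1 b 1 c] by simp
  have wide: "wide_diam D f n r \<le> \<sigma> * r + d"
    using wide_diam_le[OF assms] unfolding \<sigma>_def .
  have "narrow_diam D f n r \<le> (a + 4 * (b * c)) * (2 * r + wide_diam D f n r) + 2 * (b * c) * r + d"
    by (rule narrow_diam_le[OF assms])
  also have "\<dots> \<le> (a + 4 * (b * c)) * ((2 + \<sigma>) * r + d) + 2 * (b * c) * r + d"
    using wide a \<open>1 \<le> b * c\<close> by (intro add_right_mono mult_left_mono) (auto simp: algebra_simps)
  finally have "layered_control D f n r
      \<le> ((a + 4 * (b * c)) * (2 + \<sigma>) + 2 * (b * c) + 2 * \<sigma> + 2) * r + (a + 4 * (b * c) + 3) * d"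
    using wide unfolding layered_control_def by (simp add: algebra_simps)
  also have "\<dots> \<le> 20 * (6 * (a + 2 * b * c)^2 + (a + 2 * b * c) * b * c * (real n + 4)) * r
      + (a + 4 * b * c + 3) * d"
  proof -
    have "(a + 4 * (b * c)) * (2 + \<sigma>) + 2 * (b * c) + 2 * \<sigma> + 2
        \<le> 20 * (6 * (a + 2 * b * c)^2 + (a + 2 * b * c) * b * c * (real n + 4))"
      using layered_coefficient_le[OF a \<open>1 \<le> b * c\<close>, of "real n"]
      unfolding \<sigma>_def by (simp add: algebra_simps)
    from mult_right_mono[OF this, of r] assms show ?thesis
      by (simp add: mult.assoc)
  qed
  finally show ?thesis .
qed

end

lemma linearly_layerable_control_fun_class:
  assumes C: "\<forall>G\<in>C. finite_wgraph G" and ab: "1 \<le> a" "1 \<le> b" "1 \<le> c" "0 \<le> d"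
    and "linearly_layerable c C Ls"
    and "\<forall>i. \<exists>Di. control_fun_class Di n (Ls i) \<and> (\<forall>r>0. Di r \<le> a * r + b * real i + d)"
  shows "\<exists>DC. control_fun_class DC (Suc n) C \<and> (\<forall>r>0. DC r
    \<le> 20 * (6 * (a + 2 * b * c)^2 + (a + 2 * b * c) * b * c * (real n + 4)) * r + (a + 4 * b * c + 3) * d)"
proof -
  obtain f D where f: "layerable_with C Ls f" "\<And>S. 0 < S \<Longrightarrow> real (f S) \<le> c * S"
    and D: "\<And>i. control_fun_class (D i) n (Ls i)" "\<And>i r. 0 < r \<Longrightarrow> D i r \<le> a * r + b * real i + d"
    using assms(6,7) unfolding linearly_layerable_def by metis
  have "r \<le> a * r + b * real i + d" if "0 < r" for i r
    using that ab mult_right_mono[of 1 a r] by (simp add: add_increasing2)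
  with ab f(2) D(2) interpret linear_layering a b c d "\<lambda>i r. max (D i r) r" f
    by unfold_locales auto
  show ?thesis
    using control_fun_class_layered[OF C f(1) D(1)] layered_control_le by blast
qed

theorem theorem2p6:
  fixes n :: nat and Ls :: "nat \<Rightarrow> 'v wgraph set" and C :: "'v wgraph set"
  assumes graphsL: "\<And>i. \<forall>G\<in>Ls i. finite_wgraph G"
    and graphsC: "\<forall>G\<in>C. finite_wgraph G"
    and monoL: "\<And>i. Ls i \<subseteq> Ls (Suc i)"
    and dimL: "\<And>i. asdim_le (Ls i) n"
    and lay: "layerable C Ls"
  shows "asdim_le C (Suc n) \<and>
    (\<forall>a b c d. a \<ge> 1 \<and> b \<ge> 1 \<and> c \<ge> 1 \<and> d \<ge> 0 \<and> linearly_layerable c C Ls \<and>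
       (\<forall>i. \<exists>Di. control_fun_class Di n (Ls i) \<and> (\<forall>r>0. Di r \<le> a * r + b * real i + d))
     \<longrightarrow> asdim_le_linear C (Suc n) \<and>
         (d = 0 \<longrightarrow> ANdim_le C (Suc n) \<and>
            (\<exists>DC. control_fun_class DC (Suc n) C \<and>
               (\<forall>r>0. DC r \<le> 20 * (6 * (a + 2*b*c)^2 + (a + 2*b*c) * b * c * (real n + 4)) * r))))"
proof (intro conjI allI impI)
  obtain f D where "layerable_with C Ls f" "\<And>i. control_fun_class (D i) n (Ls i)"
    using lay dimL unfolding layerable_def asdim_le_def by metis
  with control_fun_class_layered[OF graphsC] show "asdim_le C (Suc n)"
    unfolding asdim_le_def by blast
next
  fix a b c d :: real
  define T where "T = 20 * (6 * (a + 2*b*c)^2 + (a + 2*b*c) * b * c * (real n + 4))"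
  define K where "K = (a + 4 * b * c + 3) * d"
  assume "1 \<le> a \<and> 1 \<le> b \<and> 1 \<le> c \<and> 0 \<le> d \<and> linearly_layerable c C Ls \<and>
    (\<forall>i. \<exists>Di. control_fun_class Di n (Ls i) \<and> (\<forall>r>0. Di r \<le> a * r + b * real i + d))"
  then have "0 \<le> T" "0 \<le> K"
    and "\<exists>DC. control_fun_class DC (Suc n) C \<and> (\<forall>r>0. DC r \<le> T * r + K)"
    using linearly_layerable_control_fun_class[OF graphsC] unfolding T_def K_def by auto
  then obtain DC where DC: "control_fun_class DC (Suc n) C" and DC_le: "\<And>r. 0 < r \<Longrightarrow> DC r \<le> T * r + K"
    by blast
  have "DC r \<le> (T + K) * r + (T + K)" if "0 < r" for r
    using DC_le[OF that] mult_nonneg_nonneg[OF \<open>0 \<le> K\<close> less_imp_le[OF that]] \<open>0 \<le> T\<close>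
    by (simp add: algebra_simps)
  with DC show "asdim_le_linear C (Suc n)"
    unfolding asdim_le_linear_def by blast
  assume "d = 0"
  with DC DC_le show "ANdim_le C (Suc n)" "\<exists>DC. control_fun_class DC (Suc n) C \<and> (\<forall>r>0. DC r \<le> T * r)"
    unfolding ANdim_le_def K_def by auto
qed

end
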